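(* Let $G=(V,E)$ be an undirected graph with $n$ vertices in which every vertex has degree at most $d$, and let $\pi$ be a uniformly random ordering of $V$. (i) For a $\delta$-prefix $P$ with $\delta=O(\log(n)/d)$, the longest directed path in the priority DAG of $G[P]$ has length $O(\log n)$ with high probability. (ii) For a $\delta$-prefix $P$ with $\delta\le 1/d$, the longest directed path in the priority DAG of $G[P]$ has length $O(\log n/\log\log n)$ with high probability.
   Context: For $0<\delta\le1$, the $\delta$-prefix of $V$ with respect to $\pi$ is the set of the $\delta|V|$ earliest vertices in $\pi$; $G[P]$ is the induced subgraph. The priority DAG directs each edge from its earlier endpoint to its later endpoint in $\pi$. "With high probability" means with probability at least $1-1/n^{c}$ for any constant $c$, affecting the constants in the asymptotic notation. *)

theory Defs
  imports "HOL-Probability.Probability" "HOL-Combinatorics.Multiset_Permutations"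
begin

definition ugraph :: "nat set \<Rightarrow> (nat \<Rightarrow> nat \<Rightarrow> bool) \<Rightarrow> bool" where
  "ugraph V E \<longleftrightarrow> finite V \<and>
     (\<forall>u v. E u v \<longrightarrow> u \<in> V \<and> v \<in> V \<and> u \<noteq> v \<and> E v u)"

definition max_degree_le :: "nat set \<Rightarrow> (nat \<Rightarrow> nat \<Rightarrow> bool) \<Rightarrow> nat \<Rightarrow> bool" where
  "max_degree_le V E d \<longleftrightarrow> (\<forall>u\<in>V. card {v \<in> V. E u v} \<le> d)"

definition random_ordering :: "nat set \<Rightarrow> nat list pmf" where
  "random_ordering V = pmf_of_set (permutations_of_set V)"

definition earlier :: "nat list \<Rightarrow> nat \<Rightarrow> nat \<Rightarrow> bool" where
  "earlier \<pi> u v \<longleftrightarrow> (\<exists>i j. i < j \<and> j < length \<pi> \<and> \<pi> ! i = u \<and> \<pi> ! j = v)"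

definition delta_prefix :: "nat list \<Rightarrow> real \<Rightarrow> nat set" where
  "delta_prefix \<pi> \<delta> = set (take (nat \<lfloor>\<delta> * real (length \<pi>)\<rfloor>) \<pi>)"

text \<open>A directed path (as vertex list) in the priority DAG of G[P]: all vertices in P,
  consecutive vertices adjacent in G, and directed from earlier to later in pi.\<close>
definition dag_path :: "(nat \<Rightarrow> nat \<Rightarrow> bool) \<Rightarrow> nat list \<Rightarrow> nat set \<Rightarrow> nat list \<Rightarrow> bool" where
  "dag_path E \<pi> P p \<longleftrightarrow> p \<noteq> [] \<and> set p \<subseteq> P \<and>
     (\<forall>i. Suc i < length p \<longrightarrow> E (p ! i) (p ! Suc i) \<and> earlier \<pi> (p ! i) (p ! Suc i))"

definition longest_dag_path :: "(nat \<Rightarrow> nat \<Rightarrow> bool) \<Rightarrow> nat list \<Rightarrow> nat set \<Rightarrow> nat" where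
  "longest_dag_path E \<pi> P = Max (insert 0 {length p - 1 | p. dag_path E \<pi> P p})"

end

theory Submission
  imports Defs "HOL-Library.Sublist"
begin

text \<open>
  Let \<open>n = |V|\<close> and \<open>m = \<lfloor>\<delta> n\<rfloor>\<close>. A directed path with \<open>J\<close> vertices in the priority DAG
  of \<open>G[P]\<close> is a walk of \<open>G\<close> with \<open>J\<close> distinct vertices that occurs as a subsequence of the
  first \<open>m\<close> entries of \<open>\<pi>\<close>. There are at most \<open>n d^(J - 1)\<close> such walks, and a fixed list of
  \<open>J\<close> distinct vertices is a subsequence of the \<open>m\<close>-prefix of a uniformly random permutation
  with probability \<open>(m choose J) (n - J)! / n! \<le> \<delta>^J / J!\<close>. By the union bound a path with
  \<open>J\<close> vertices exists with probability at most \<open>n (d \<delta>)^J / J!\<close>. Since \<open>J! \<ge> (J / e)^J\<close>, this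
  is at most \<open>n^(-c)\<close> as soon as \<open>J \<ge> C log n\<close> when \<open>d \<delta> = O(log n)\<close>, and as soon as
  \<open>J \<ge> C log n / log log n\<close> when \<open>d \<delta> \<le> 1\<close>.
\<close>

lemma earlier_Cons:
  "earlier (x # xs) u v \<longleftrightarrow> u = x \<and> v \<in> set xs \<or> earlier xs u v"
proof
  assume "earlier (x # xs) u v"
  then obtain i j where ij: "i < j" "j < Suc (length xs)" "(x # xs) ! i = u" "(x # xs) ! j = v"
    unfolding earlier_def by auto
  then obtain j' where j': "j = Suc j'" by (cases j) auto
  show "u = x \<and> v \<in> set xs \<or> earlier xs u v"
  proof (cases i)
    case 0
    then show ?thesis using ij j' by auto
  next
    case (Suc i')
    then have "earlier xs u v" unfolding earlier_def using ij j' by (intro exI[of _ i'] exI[of _ j']) auto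
    then show ?thesis ..
  qed
next
  assume "u = x \<and> v \<in> set xs \<or> earlier xs u v"
  then show "earlier (x # xs) u v"
  proof
    assume "u = x \<and> v \<in> set xs"
    then obtain j where "j < length xs" "xs ! j = v" by (auto simp: in_set_conv_nth)
    then show ?thesis using \<open>u = x \<and> v \<in> set xs\<close> unfolding earlier_def
      by (intro exI[of _ 0] exI[of _ "Suc j"]) auto
  next
    assume "earlier xs u v"
    then obtain i j where "i < j" "j < length xs" "xs ! i = u" "xs ! j = v"
      unfolding earlier_def by auto
    then show ?thesis unfolding earlier_def by (intro exI[of _ "Suc i"] exI[of _ "Suc j"]) auto
  qed
qed

lemma earlier_imp_in_set: "earlier \<pi> u v \<Longrightarrow> v \<in> set \<pi>"
  unfolding earlier_def by auto

lemma transp_earlier: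
  assumes "distinct \<pi>"
  shows "transp (earlier \<pi>)"
proof (rule transpI)
  fix u v w assume "earlier \<pi> u v" "earlier \<pi> v w"
  then obtain i j j' k where "i < j" "j < length \<pi>" "j' < k" "k < length \<pi>"
      "\<pi> ! i = u" "\<pi> ! j = v" "\<pi> ! j' = v" "\<pi> ! k = w"
    unfolding earlier_def by blast
  moreover then have "j = j'" using assms nth_eq_iff_index_eq[of \<pi> j j'] by auto
  ultimately show "earlier \<pi> u w" unfolding earlier_def by (intro exI[of _ i] exI[of _ k]) auto
qed

lemma earlier_take:
  assumes "distinct \<pi>" "earlier \<pi> u v" "v \<in> set (take m \<pi>)"
  shows "earlier (take m \<pi>) u v"
proof -
  obtain i j where ij: "i < j" "j < length \<pi>" "\<pi> ! i = u" "\<pi> ! j = v"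
    using assms(2) unfolding earlier_def by auto
  obtain j' where j': "j' < min m (length \<pi>)" "\<pi> ! j' = v"
    using assms(3) by (auto simp: in_set_conv_nth)
  have "j' = j" using assms(1) ij j' nth_eq_iff_index_eq[of \<pi> j j'] by auto
  then show ?thesis unfolding earlier_def using ij j' by (intro exI[of _ i] exI[of _ j]) auto
qed

lemma sorted_wrt_earlier_imp_subseq:
  assumes "distinct \<pi>" "set p \<subseteq> set \<pi>" "sorted_wrt (earlier \<pi>) p"
  shows "subseq p \<pi>"
  using assms
proof (induction \<pi> arbitrary: p)
  case Nil
  then show ?case by simp
next
  case (Cons x xs)
  show ?case
  proof (cases p)
    case Nil
    then show ?thesis by simp
  next
    case (Cons y ys)
    have ys: "set ys \<subseteq> set xs"
      using Cons.prems(3) \<open>p = y # ys\<close> by (auto simp: earlier_Cons dest: earlier_imp_in_set)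
    have sorted_tail: "sorted_wrt (earlier xs) q" if "sorted_wrt (earlier (x # xs)) q" "x \<notin> set q" for q
      by (rule sorted_wrt_mono_rel[OF _ that(1)]) (use that(2) in \<open>auto simp: earlier_Cons\<close>)
    show ?thesis
    proof (cases "x = y")
      case True
      have "x \<notin> set ys" using ys Cons.prems(1) by auto
      then have "subseq ys xs"
        using Cons.IH Cons.prems ys sorted_tail \<open>p = y # ys\<close> by simp
      then show ?thesis using True \<open>p = y # ys\<close> by simp
    next
      case False
      then have "x \<notin> set p" using ys Cons.prems(1) \<open>p = y # ys\<close> by auto
      then have "subseq p xs"
        using Cons.IH Cons.prems sorted_tail by auto
      then show ?thesis by (rule list_emb_Cons)
    qed
  qed
qed

lemma dag_path_subseq_take:
  assumes "\<pi> \<in> permutations_of_set V" "dag_path E \<pi> (set (take m \<pi>)) p"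
  shows "subseq p (take m \<pi>)"
proof (rule sorted_wrt_earlier_imp_subseq)
  have "distinct \<pi>" using assms(1) by (rule permutations_of_setD)
  then show "distinct (take m \<pi>)" by simp
  show "set p \<subseteq> set (take m \<pi>)" using assms(2) unfolding dag_path_def by blast
  have "successively (earlier \<pi>) p"
    using assms(2) unfolding dag_path_def successively_conv_nth by blast
  then have "sorted_wrt (earlier \<pi>) p"
    using successively_conv_sorted_wrt[OF transp_earlier[OF \<open>distinct \<pi>\<close>]] by blast
  show "sorted_wrt (earlier (take m \<pi>)) p"
    by (rule sorted_wrt_mono_rel[OF _ \<open>sorted_wrt (earlier \<pi>) p\<close>])
      (use \<open>distinct \<pi>\<close> \<open>set p \<subseteq> set (take m \<pi>)\<close> earlier_take in blast)
qed

lemma card_filter_permutations_of_set: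
  assumes "finite A" "A \<noteq> {}"
  shows "card {\<pi> \<in> permutations_of_set A. P \<pi>}
           = (\<Sum>x\<in>A. card {xs \<in> permutations_of_set (A - {x}). P (x # xs)})"
proof -
  have "{\<pi> \<in> permutations_of_set A. P \<pi>}
          = (\<Union>x\<in>A. (#) x ` {xs \<in> permutations_of_set (A - {x}). P (x # xs)})"
    by (subst permutations_of_set_nonempty[OF assms(2)]) auto
  also have "card \<dots> = (\<Sum>x\<in>A. card ((#) x ` {xs \<in> permutations_of_set (A - {x}). P (x # xs)}))"
    by (rule card_UN_disjoint) (use assms(1) in auto)
  also have "\<dots> = (\<Sum>x\<in>A. card {xs \<in> permutations_of_set (A - {x}). P (x # xs)})"
    by (intro sum.cong refl card_image) auto
  finally show ?thesis .
qed

lemma binomial_fact_Suc_Suc: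
  fixes m n j :: nat
  assumes "m \<le> n" "j \<le> n"
  shows "(m choose j) * fact (n - j) + (n - j) * ((m choose Suc j) * fact (n - Suc j))
           = (Suc m choose Suc j) * fact (n - j)"
proof (cases "j < n")
  case True
  then obtain k where "n - j = Suc k" "n - Suc j = k"
    by (metis Suc_diff_Suc diff_Suc_1)
  then show ?thesis by (simp add: algebra_simps)
next
  case False
  then show ?thesis using assms by simp
qed

lemma card_permutations_subseq_take:
  assumes "finite A" "distinct p" "set p \<subseteq> A" "m \<le> card A"
  shows "card {\<pi> \<in> permutations_of_set A. subseq p (take m \<pi>)}
           = (m choose length p) * fact (card A - length p)"
  using assms
proof (induction "card A" arbitrary: A m p)
  case 0
  then show ?case by auto
next
  case (Suc n)
  show ?case
  proof (cases "p = [] \<or> m = 0")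
    case True
    then show ?thesis using Suc.prems by (cases p) auto
  next
    case False
    then obtain y ys m' where p: "p = y # ys" and m: "m = Suc m'" by (metis neq_Nil_conv not0_implies_Suc)
    define f where "f x = card {xs \<in> permutations_of_set (A - {x}). subseq p (take m (x # xs))}" for x
    have y: "y \<in> A" using Suc.prems p by auto
    have card_minus: "card (A - {x}) = n" if "x \<in> A" for x
      using that Suc.hyps(2) Suc.prems(1) by simp
    have m': "m' \<le> n" using Suc.prems(4) Suc.hyps(2) m by simp
    have f_y: "f y = (m' choose length ys) * fact (n - length ys)"
    proof -
      have "f y = card {xs \<in> permutations_of_set (A - {y}). subseq ys (take m' xs)}"
        unfolding f_def p m by simp
      also have "\<dots> = (m' choose length ys) * fact (card (A - {y}) - length ys)"
        by (rule Suc.hyps(1)) (use Suc.prems p m' card_minus[OF y] in auto)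
      also have "card (A - {y}) = n" using card_minus[OF y] .
      finally show ?thesis .
    qed
    have f_ys: "f x = 0" if "x \<in> set ys" for x
    proof -
      have "\<not> subseq p (take m' xs)" if "xs \<in> permutations_of_set (A - {x})" for xs
      proof
        assume "subseq p (take m' xs)"
        then have "x \<in> set (take m' xs)" using \<open>x \<in> set ys\<close> p by (auto elim: list_emb_set)
        then show False using that by (auto dest: in_set_takeD permutations_of_setD)
      qed
      moreover have "x \<noteq> y" using that Suc.prems(2) p by auto
      ultimately show ?thesis unfolding f_def m using p by simp
    qed
    have f_other: "f x = (m' choose length p) * fact (n - length p)" if "x \<in> A - set p" for x
    proof -
      have "f x = card {xs \<in> permutations_of_set (A - {x}). subseq p (take m' xs)}"
        unfolding f_def m using that p by (auto intro: arg_cong[where f = card])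
      also have "\<dots> = (m' choose length p) * fact (card (A - {x}) - length p)"
        by (rule Suc.hyps(1)) (use Suc.prems that m' card_minus in auto)
      also have "card (A - {x}) = n" using card_minus that by blast
      finally show ?thesis .
    qed
    have "card {\<pi> \<in> permutations_of_set A. subseq p (take m \<pi>)} = (\<Sum>x\<in>A. f x)"
      unfolding f_def using Suc.prems(1) y by (intro card_filter_permutations_of_set) auto
    also have "\<dots> = f y + (\<Sum>x\<in>A - {y}. f x)"
      using Suc.prems(1) y by (simp add: sum.remove)
    also have "(\<Sum>x\<in>A - {y}. f x) = (\<Sum>x\<in>A - set p. f x)"
      by (rule sum.mono_neutral_cong_right) (use Suc.prems(1) p f_ys in auto)
    also have "\<dots> = card (A - set p) * ((m' choose length p) * fact (n - length p))"
      using f_other by simp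
    also have "card (A - set p) = n - length ys"
      using Suc.prems Suc.hyps(2) p by (simp add: card_Diff_subset distinct_card)
    also have "length ys \<le> n"
      using Suc.prems Suc.hyps(2) p by (metis card_mono distinct_card length_Cons Suc_le_mono)
    then have "f y + (n - length ys) * ((m' choose length p) * fact (n - length p))
                 = (m choose length p) * fact (card A - length p)"
      using binomial_fact_Suc_Suc[of m' n "length ys"] f_y Suc.prems(4) p m by (simp flip: Suc.hyps(2))
    finally show ?thesis .
  qed
qed

lemma real_choose_Suc:
  "real (k choose Suc j) = real (k choose j) * real (k - j) / real (Suc j)"
proof -
  have "Suc j * (k choose Suc j) = (k - j) * (k choose j)"
    by (metis binomial_absorb_comp binomial_absorption)
  then have "real (Suc j) * real (k choose Suc j) = real (k - j) * real (k choose j)"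
    by (metis of_nat_mult)
  then show ?thesis by (simp add: field_simps del: of_nat_Suc)
qed

lemma binomial_ratio_le_power:
  assumes "m \<le> n"
  shows "real (m choose J) / real (n choose J) \<le> (real m / real n) ^ J"
proof (induction J)
  case 0
  then show ?case by simp
next
  case (Suc J)
  show ?case
  proof (cases "J < n")
    case False
    then have "n choose Suc J = 0" by simp
    then show ?thesis by (simp only: of_nat_0 div_by_0) simp
  next
    case True
    define a b where "a = real (m choose J)" and "b = real (n choose J)"
    have "b > 0" using True by (simp add: b_def)
    have "real (n - J) > 0" using True by simp
    have "real (m choose Suc J) / real (n choose Suc J) = a / b * (real (m - J) / real (n - J))"
      unfolding real_choose_Suc a_def[symmetric] b_def[symmetric]
      using \<open>b > 0\<close> \<open>real (n - J) > 0\<close> by (simp add: field_simps del: of_nat_Suc)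
    also have "\<dots> \<le> (real m / real n) ^ J * (real m / real n)"
    proof (rule mult_mono)
      show "a / b \<le> (real m / real n) ^ J" using Suc.IH by (simp add: a_def b_def)
      show "real (m - J) / real (n - J) \<le> real m / real n"
      proof (cases "J \<le> m")
        case True
        have "real J * real m \<le> real J * real n" using assms by (simp add: mult_left_mono)
        then have "real (m - J) * real n \<le> real m * real (n - J)"
          using True \<open>J < n\<close> by (simp add: of_nat_diff algebra_simps)
        then show ?thesis using \<open>real (n - J) > 0\<close> \<open>J < n\<close> by (simp add: divide_simps)
      qed simp
    qed auto
    finally show ?thesis by (simp only: power_Suc2)
  qed
qed

lemma prob_subseq_take_permutation:
  assumes "finite A" "distinct p" "set p \<subseteq> A" "m \<le> card A"
  shows "measure_pmf.prob (pmf_of_set (permutations_of_set A)) {\<pi>. subseq p (take m \<pi>)}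
           \<le> (real m / real (card A)) ^ length p / fact (length p)"
proof -
  define n J where "n = card A" and "J = length p"
  have "J \<le> n" using assms unfolding n_def J_def by (metis card_mono distinct_card)
  have "permutations_of_set A \<inter> {\<pi>. subseq p (take m \<pi>)}
          = {\<pi> \<in> permutations_of_set A. subseq p (take m \<pi>)}" by blast
  then have "measure_pmf.prob (pmf_of_set (permutations_of_set A)) {\<pi>. subseq p (take m \<pi>)}
          = real ((m choose J) * fact (n - J)) / fact n"
    using assms card_permutations_subseq_take[OF assms]
    by (simp add: measure_pmf_of_set n_def J_def)
  also have "\<dots> = real (m choose J) / real (n choose J) / fact J"
    using \<open>J \<le> n\<close> by (simp add: binomial_fact)
  also have "\<dots> \<le> (real m / real n) ^ J / fact J"
    by (intro divide_right_mono binomial_ratio_le_power) (use assms in \<open>auto simp: n_def\<close>)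
  finally show ?thesis unfolding n_def J_def .
qed

definition walks :: "nat set \<Rightarrow> (nat \<Rightarrow> nat \<Rightarrow> bool) \<Rightarrow> nat \<Rightarrow> nat list set" where
  "walks V E k = {p. length p = Suc k \<and> set p \<subseteq> V \<and> successively E p}"

lemma finite_walks: "finite V \<Longrightarrow> finite (walks V E k)"
  by (rule finite_subset[OF _ finite_lists_length_eq[of V "Suc k"]]) (auto simp: walks_def)

lemma card_walks_le:
  assumes "ugraph V E" "max_degree_le V E d"
  shows "card (walks V E k) \<le> card V * d ^ k"
proof (induction k)
  case 0
  have "walks V E 0 = (\<lambda>v. [v]) ` V"
    by (auto simp: walks_def length_Suc_conv)
  then show ?case by (simp add: card_image_le assms(1)[unfolded ugraph_def])
next
  case (Suc k)
  have "finite V" using assms(1) by (simp add: ugraph_def)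
  have "walks V E (Suc k) \<subseteq> (\<Union>q\<in>walks V E k. (\<lambda>v. v # q) ` {v \<in> V. E (hd q) v})"
  proof
    fix p assume p: "p \<in> walks V E (Suc k)"
    then obtain v q where "p = v # q" "q \<noteq> []" by (auto simp: walks_def length_Suc_conv)
    with p have "q \<in> walks V E k" "v \<in> V" "E v (hd q)"
      by (auto simp: walks_def successively_Cons)
    moreover from \<open>E v (hd q)\<close> have "E (hd q) v"
      using assms(1) by (simp add: ugraph_def)
    ultimately show "p \<in> (\<Union>q\<in>walks V E k. (\<lambda>v. v # q) ` {v \<in> V. E (hd q) v})"
      using \<open>p = v # q\<close> by blast
  qed
  then have "card (walks V E (Suc k))
               \<le> card (\<Union>q\<in>walks V E k. (\<lambda>v. v # q) ` {v \<in> V. E (hd q) v})"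
    by (intro card_mono) (use \<open>finite V\<close> finite_walks in auto)
  also have "\<dots> \<le> (\<Sum>q\<in>walks V E k. card ((\<lambda>v. v # q) ` {v \<in> V. E (hd q) v}))"
    by (rule card_UN_le) (rule finite_walks[OF \<open>finite V\<close>])
  also have "\<dots> \<le> (\<Sum>q\<in>walks V E k. d)"
  proof (rule sum_mono)
    fix q assume "q \<in> walks V E k"
    then have "hd q \<in> V" by (cases q) (auto simp: walks_def)
    then have "card {v \<in> V. E (hd q) v} \<le> d" using assms(2) by (simp add: max_degree_le_def)
    then show "card ((\<lambda>v. v # q) ` {v \<in> V. E (hd q) v}) \<le> d"
      using card_image_le[of "{v \<in> V. E (hd q) v}" "\<lambda>v. v # q"] \<open>finite V\<close> by simp
  qed
  also have "\<dots> \<le> card V * d ^ k * d" using Suc.IH by simp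
  finally show ?case by (simp add: ac_simps)
qed

lemma longest_dag_path_le:
  assumes "\<And>p. dag_path E \<pi> P p \<Longrightarrow> length p \<le> Suc k"
  shows "longest_dag_path E \<pi> P \<le> k"
proof -
  let ?L = "insert 0 {length p - 1 | p. dag_path E \<pi> P p}"
  have "?L \<subseteq> {..k}" using assms by fastforce
  moreover then have "finite ?L" by (rule finite_subset) simp
  ultimately show ?thesis unfolding longest_dag_path_def by (subst Max_le_iff) auto
qed

lemma long_dag_path_imp_walk_subseq:
  assumes "\<pi> \<in> permutations_of_set V" "dag_path E \<pi> (set (take m \<pi>)) q" "J \<le> length q" "0 < J"
  shows "take J q \<in> walks V E (J - 1) \<and> distinct (take J q) \<and> subseq (take J q) (take m \<pi>)"
proof (intro conjI)
  have "subseq q (take m \<pi>)" using assms(1,2) by (rule dag_path_subseq_take)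
  then show "subseq (take J q) (take m \<pi>)"
    by (rule subseq_order.trans[OF prefix_imp_subseq[OF take_is_prefix]])
  then obtain N where "take J q = nths (take m \<pi>) N" by (auto simp: subseq_conv_nths)
  moreover have "distinct \<pi>" using assms(1) by (rule permutations_of_setD)
  ultimately show "distinct (take J q)" by simp
  have "set q \<subseteq> set \<pi>"
    using assms(2) unfolding dag_path_def by (meson order_trans set_take_subset)
  then have "set (take J q) \<subseteq> V"
    using assms(1) set_take_subset by (metis order_trans permutations_of_setD(1))
  moreover have "successively E (take J q)"
    using assms(2) by (simp add: dag_path_def successively_conv_nth)
  moreover have "length (take J q) = Suc (J - 1)" using assms(3,4) by simp
  ultimately show "take J q \<in> walks V E (J - 1)" by (simp add: walks_def)
qed

lemma not_longest_dag_path_le_imp_walk_subseq: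
  assumes "\<pi> \<in> permutations_of_set V" "\<not> longest_dag_path E \<pi> (delta_prefix \<pi> \<delta>) \<le> k"
  shows "\<exists>p \<in> walks V E (Suc k). distinct p \<and> subseq p (take (nat \<lfloor>\<delta> * real (card V)\<rfloor>) \<pi>)"
proof -
  define m where "m = nat \<lfloor>\<delta> * real (card V)\<rfloor>"
  have "delta_prefix \<pi> \<delta> = set (take m \<pi>)"
    using assms(1) by (simp add: delta_prefix_def m_def length_finite_permutations_of_set)
  then have "\<not> (\<forall>q. dag_path E \<pi> (set (take m \<pi>)) q \<longrightarrow> length q \<le> Suc k)"
    using assms(2) longest_dag_path_le[of E \<pi> "delta_prefix \<pi> \<delta>" k] by auto
  then obtain q where "dag_path E \<pi> (set (take m \<pi>)) q" "Suc (Suc k) \<le> length q"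
    by auto
  then show ?thesis
    using long_dag_path_imp_walk_subseq[OF assms(1)] unfolding m_def by fastforce
qed

lemma set_pmf_random_ordering:
  "finite V \<Longrightarrow> set_pmf (random_ordering V) = permutations_of_set V"
  unfolding random_ordering_def by (simp add: set_pmf_of_set permutations_of_set_empty_iff)

lemma prob_subseq_delta_prefix:
  assumes "finite V" "distinct p" "set p \<subseteq> V" "0 \<le> \<delta>" "\<delta> \<le> 1"
  shows "measure_pmf.prob (random_ordering V) {\<pi>. subseq p (take (nat \<lfloor>\<delta> * real (card V)\<rfloor>) \<pi>)}
           \<le> \<delta> ^ length p / fact (length p)"
proof -
  define n m where "n = card V" and "m = nat \<lfloor>\<delta> * real n\<rfloor>"
  have "0 \<le> \<delta> * real n" "\<delta> * real n \<le> real n"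
    using assms(4,5) mult_right_mono[of \<delta> 1 "real n"] by auto
  then have "real m \<le> \<delta> * real n" "m \<le> n"
    unfolding m_def by linarith+
  have "measure_pmf.prob (random_ordering V) {\<pi>. subseq p (take m \<pi>)}
          \<le> (real m / real n) ^ length p / fact (length p)"
    using prob_subseq_take_permutation[OF assms(1-3)] \<open>m \<le> n\<close>
    unfolding random_ordering_def n_def by simp
  also have "\<dots> \<le> \<delta> ^ length p / fact (length p)"
    using \<open>real m \<le> \<delta> * real n\<close> assms(4)
    by (intro divide_right_mono power_mono) (auto simp: divide_le_eq mult.commute)
  finally show ?thesis unfolding m_def n_def .
qed

lemma prob_longest_dag_path_le:
  assumes "ugraph V E" "max_degree_le V E d" "0 \<le> \<delta>" "\<delta> \<le> 1"
  shows "measure_pmf.prob (random_ordering V) {\<pi>. longest_dag_path E \<pi> (delta_prefix \<pi> \<delta>) \<le> k}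
           \<ge> 1 - real (card V) * real d ^ Suc k * \<delta> ^ Suc (Suc k) / fact (Suc (Suc k))"
proof -
  define n m J where "n = card V" and "m = nat \<lfloor>\<delta> * real n\<rfloor>" and "J = Suc (Suc k)"
  define W where "W = {p \<in> walks V E (Suc k). distinct p}"
  define Long where "Long = {\<pi>. \<not> longest_dag_path E \<pi> (delta_prefix \<pi> \<delta>) \<le> k}"
  let ?M = "random_ordering V"
  have "finite V" using assms(1) by (simp add: ugraph_def)
  have "W \<subseteq> walks V E (Suc k)" by (auto simp: W_def)
  then have card_W: "card W \<le> n * d ^ Suc k"
    using card_mono[OF finite_walks[OF \<open>finite V\<close>]] card_walks_le[OF assms(1,2), of "Suc k"]
    unfolding n_def by (meson order_trans)
  have Long_walk: "\<pi> \<in> (\<Union>p\<in>W. {\<pi>. subseq p (take m \<pi>)})"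
    if "\<pi> \<in> set_pmf ?M" "\<pi> \<in> Long" for \<pi>
    using that not_longest_dag_path_le_imp_walk_subseq[of \<pi> V E \<delta> k] \<open>finite V\<close>
    by (auto simp: set_pmf_random_ordering W_def Long_def m_def n_def)
  have "measure_pmf.prob ?M Long \<le> measure_pmf.prob ?M (\<Union>p\<in>W. {\<pi>. subseq p (take m \<pi>)})"
    using Long_walk by (intro measure_pmf.finite_measure_mono_AE AE_pmfI) auto
  also have "\<dots> \<le> (\<Sum>p\<in>W. measure_pmf.prob ?M {\<pi>. subseq p (take m \<pi>)})"
    using finite_walks[OF \<open>finite V\<close>] unfolding W_def
    by (intro measure_pmf.finite_measure_subadditive_finite) auto
  also have "\<dots> \<le> (\<Sum>p\<in>W. \<delta> ^ J / fact J)"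
  proof (rule sum_mono)
    fix p assume "p \<in> W"
    then have "distinct p" "set p \<subseteq> V" "length p = J" by (auto simp: W_def walks_def J_def)
    then show "measure_pmf.prob ?M {\<pi>. subseq p (take m \<pi>)} \<le> \<delta> ^ J / fact J"
      using prob_subseq_delta_prefix[OF \<open>finite V\<close> _ _ assms(3,4), of p] unfolding m_def n_def
      by (simp only:)
  qed
  also have "\<dots> = real (card W) * (\<delta> ^ J / fact J)" by simp
  also have "\<dots> \<le> real (n * d ^ Suc k) * (\<delta> ^ J / fact J)"
    by (intro mult_right_mono of_nat_mono card_W) (simp add: assms(3))
  finally have "measure_pmf.prob ?M Long \<le> real n * real d ^ Suc k * \<delta> ^ J / fact J" by simp
  moreover have "{\<pi>. longest_dag_path E \<pi> (delta_prefix \<pi> \<delta>) \<le> k} = space ?M - Long"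
    by (auto simp: Long_def)
  ultimately show ?thesis
    using measure_pmf.prob_compl[of Long ?M] unfolding n_def J_def by simp
qed

lemma prob_longest_dag_path_le_bound:
  assumes "ugraph V E" "max_degree_le V E d" "1 \<le> d" "0 \<le> \<delta>" "\<delta> \<le> 1" "0 < card V" "0 \<le> B"
    and tail: "\<And>J. B \<le> real J \<Longrightarrow> (real d * \<delta>) ^ J / fact J \<le> real (card V) powr - (c + 1)"
  shows "measure_pmf.prob (random_ordering V)
           {\<pi>. real (longest_dag_path E \<pi> (delta_prefix \<pi> \<delta>)) \<le> B}
         \<ge> 1 - 1 / real (card V) powr c"
proof -
  define n k J where "n = real (card V)" and "k = nat \<lfloor>B\<rfloor>" and "J = Suc (Suc k)"
  have "n > 0" using assms(6) by (simp add: n_def)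
  have "real k \<le> B" "B \<le> real J" unfolding k_def J_def using assms(7) by linarith+
  have "real d ^ Suc k * \<delta> ^ J \<le> (real d * \<delta>) ^ J"
    unfolding J_def power_mult_distrib using assms(3,4)
    by (intro mult_right_mono power_increasing) auto
  then have "n * real d ^ Suc k * \<delta> ^ J / fact J \<le> n * ((real d * \<delta>) ^ J / fact J)"
    using \<open>n > 0\<close> by (simp add: divide_right_mono mult.assoc)
  also have "\<dots> \<le> n * n powr - (c + 1)"
    using tail[OF \<open>B \<le> real J\<close>] \<open>n > 0\<close> unfolding n_def by (intro mult_left_mono) auto
  also have "\<dots> = n powr (1 + - (c + 1))"
    using \<open>n > 0\<close> by (simp only: powr_add powr_one_gt_zero_iff) simp
  also have "\<dots> = 1 / n powr c"
    by (simp add: powr_minus_divide)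
  finally have "1 - 1 / n powr c \<le> 1 - n * real d ^ Suc k * \<delta> ^ J / fact J" by simp
  also have "\<dots> \<le> measure_pmf.prob (random_ordering V)
                    {\<pi>. longest_dag_path E \<pi> (delta_prefix \<pi> \<delta>) \<le> k}"
    using prob_longest_dag_path_le[OF assms(1,2,4,5)] unfolding n_def J_def by simp
  also have "\<dots> \<le> measure_pmf.prob (random_ordering V)
                    {\<pi>. real (longest_dag_path E \<pi> (delta_prefix \<pi> \<delta>)) \<le> B}"
    using \<open>real k \<le> B\<close> by (intro measure_pmf.finite_measure_mono) (auto intro: order_trans[OF of_nat_mono])
  finally show ?thesis unfolding n_def .
qed

lemma power_div_fact_le_exp:
  fixes x :: real
  assumes "0 \<le> x"
  shows "x ^ n / fact n \<le> exp x"
proof -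
  have "(\<Sum>i\<in>{n}. x ^ i /\<^sub>R fact i) \<le> (\<Sum>i. x ^ i /\<^sub>R fact i)"
    by (rule sum_le_suminf) (use summable_exp_generic[of x] assms in auto)
  then show ?thesis by (simp add: exp_def divide_inverse mult.commute)
qed

lemma fact_ge_power_div_exp: "(real J / exp 1) ^ J \<le> fact J"
proof -
  have "real J ^ J / fact J \<le> exp (real J)" by (rule power_div_fact_le_exp) simp
  then show ?thesis by (simp add: power_divide field_simps exp_of_nat_mult[symmetric])
qed

lemma power_div_fact_le:
  fixes x :: real
  assumes "0 \<le> x" "0 < J"
  shows "x ^ J / fact J \<le> (exp 1 * x / real J) ^ J"
proof -
  have "x ^ J / fact J \<le> x ^ J / (real J / exp 1) ^ J"
    using assms by (intro divide_left_mono fact_ge_power_div_exp) auto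
  also have "\<dots> = (exp 1 * x / real J) ^ J"
    by (simp add: power_divide field_simps)
  finally show ?thesis .
qed

lemma one_less_ln: "4 \<le> n \<Longrightarrow> 1 < ln (n :: real)"
  using exp_le ln_less_cancel_iff[of "exp 1" n] by simp

lemma power_div_fact_le_powr_log:
  fixes n x a c :: real
  assumes "4 \<le> n" "0 < a" "0 < c" "0 \<le> x" "x \<le> a * ln n"
    and J: "(exp 2 * a + c + 1) * ln n \<le> real J"
  shows "x ^ J / fact J \<le> n powr - (c + 1)"
proof -
  define L where "L = ln n"
  have "1 < L" using one_less_ln[OF assms(1)] by (simp add: L_def)
  have "0 \<le> exp 2 * a * L" "0 \<le> c * L" using assms(2,3) \<open>1 < L\<close> by simp_all
  then have "exp 2 * a * L \<le> real J" "(c + 1) * L \<le> real J"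
    using J \<open>1 < L\<close> unfolding L_def[symmetric] by (simp_all add: algebra_simps)
  moreover have "0 < (c + 1) * L" using assms(3) \<open>1 < L\<close> by simp
  ultimately have "0 < J" by linarith
  have "exp 1 * x \<le> exp 1 * (a * L)" using assms(5) by (simp add: L_def)
  also have "\<dots> = exp (-1) * (exp 2 * a * L)" by (simp add: field_simps flip: exp_add)
  also have "\<dots> \<le> exp (-1) * real J" using \<open>exp 2 * a * L \<le> real J\<close> by simp
  finally have ratio: "exp 1 * x / real J \<le> exp (-1)" using \<open>0 < J\<close> by (simp add: field_simps)
  have "x ^ J / fact J \<le> (exp 1 * x / real J) ^ J" using assms(4) \<open>0 < J\<close> by (rule power_div_fact_le)
  also have "\<dots> \<le> exp (-1) ^ J" using ratio assms(4) by (intro power_mono) auto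
  also have "\<dots> = exp (- real J)" by (simp add: exp_of_nat_mult[symmetric])
  also have "\<dots> \<le> exp (- ((c + 1) * L))" using \<open>(c + 1) * L \<le> real J\<close> by simp
  also have "\<dots> = n powr - (c + 1)" using assms(1) by (simp add: powr_def L_def algebra_simps)
  finally show ?thesis .
qed

lemma powr_le_fact_log_div_loglog:
  fixes n c :: real
  assumes "4 \<le> n" "0 < c" "(2 * c + 3) * ln n / ln (ln n) \<le> real J"
  shows "n powr (c + 1) \<le> fact J"
proof -
  define C L l where "C = 2 * c + 3" and "L = ln n" and "l = ln L"
  \<comment> \<open>\<open>y \<le> J\<close>, and already \<open>(y / e) ^ y \<ge> n ^ (c + 1)\<close> because \<open>ln y \<ge> 1 + l / 2\<close>.\<close>
  define y where "y = C * L / l"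
  have "1 < L" using one_less_ln[OF assms(1)] by (simp add: L_def)
  then have "0 < l" "l < L" by (simp_all add: l_def ln_less_self)
  have "exp 1 \<le> C" using exp_le assms(2) by (simp add: C_def)
  then have "0 < C" by (meson exp_gt_zero less_le_trans)
  then have "1 \<le> ln C" using \<open>exp 1 \<le> C\<close> ln_mono[of "exp 1" C] by simp
  have "C * l \<le> C * L"
    using \<open>l < L\<close> \<open>exp 1 \<le> C\<close> exp_gt_zero[of 1] by (intro mult_left_mono) linarith+
  then have "C \<le> y" using \<open>0 < l\<close> by (simp add: y_def field_simps)
  then have "exp 1 \<le> y" "0 < y" using \<open>exp 1 \<le> C\<close> exp_gt_zero[of 1] by linarith+
  have "y \<le> real J" using assms(3) by (simp add: y_def C_def L_def l_def)
  have "ln y = ln C + l - ln l"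
    using \<open>0 < l\<close> \<open>1 < L\<close> \<open>0 < C\<close> by (simp add: y_def l_def ln_div ln_mult)
  moreover have "ln l \<le> l / 2" using ln_le_minus_one[of "l / 2"] \<open>0 < l\<close> ln_div[of l 2] ln_le_minus_one[of 2]
    by simp
  ultimately have "l / 2 \<le> ln y - 1" using \<open>1 \<le> ln C\<close> by linarith
  then have "y * (l / 2) \<le> y * (ln y - 1)" using \<open>0 < y\<close> by simp
  moreover have "y * (l / 2) = C * L / 2" using \<open>0 < l\<close> by (simp add: y_def)
  moreover have "(c + 1) * L \<le> C * L / 2" using \<open>1 < L\<close> by (simp add: C_def field_simps)
  ultimately have "(c + 1) * L \<le> y * (ln y - 1)" by linarith
  have "n powr (c + 1) = exp ((c + 1) * L)"
    using assms(1) by (simp add: powr_def L_def mult.commute)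
  also have "\<dots> \<le> exp (y * (ln y - 1))"
    using \<open>(c + 1) * L \<le> y * (ln y - 1)\<close> by simp
  also have "\<dots> = (y / exp 1) powr y"
    using \<open>0 < y\<close> by (simp add: powr_def ln_div mult.commute)
  also have "\<dots> \<le> (y / exp 1) powr real J"
    using \<open>exp 1 \<le> y\<close> \<open>y \<le> real J\<close> by (intro powr_mono) auto
  also have "\<dots> \<le> (real J / exp 1) powr real J"
    using \<open>0 < y\<close> \<open>y \<le> real J\<close> by (intro powr_mono2 divide_right_mono) auto
  also have "\<dots> = (real J / exp 1) ^ J"
    using \<open>0 < y\<close> \<open>y \<le> real J\<close> by (simp add: powr_realpow)
  also have "\<dots> \<le> fact J" by (rule fact_ge_power_div_exp)
  finally show ?thesis .
qed

lemma power_div_fact_le_powr_log_div_loglog: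
  fixes n x c :: real
  assumes "4 \<le> n" "0 < c" "0 \<le> x" "x \<le> 1"
    and "(2 * c + 3) * ln n / ln (ln n) \<le> real J"
  shows "x ^ J / fact J \<le> n powr - (c + 1)"
proof -
  have "x ^ J \<le> 1" using assms(3,4) by (rule power_le_one)
  then have "x ^ J / fact J \<le> 1 / n powr (c + 1)"
    using assms(1) powr_le_fact_log_div_loglog[OF assms(1,2,5)] by (intro frac_le) auto
  then show ?thesis by (simp only: powr_minus_divide)
qed

lemma prob_longest_dag_path_le_log:
  assumes "ugraph V E" "max_degree_le V E d" "1 \<le> d" "4 \<le> card V" "0 < a" "0 < c"
    and "0 \<le> \<delta>" "\<delta> \<le> 1" "real d * \<delta> \<le> a * ln (real (card V))"
  shows "measure_pmf.prob (random_ordering V)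
           {\<pi>. real (longest_dag_path E \<pi> (delta_prefix \<pi> \<delta>)) \<le> (exp 2 * a + c + 1) * ln (real (card V))}
         \<ge> 1 - 1 / real (card V) powr c"
  using assms one_less_ln[of "real (card V)"]
  by (intro prob_longest_dag_path_le_bound power_div_fact_le_powr_log) auto

lemma prob_longest_dag_path_le_log_div_loglog:
  assumes "ugraph V E" "max_degree_le V E d" "1 \<le> d" "4 \<le> card V" "0 < c"
    and "0 \<le> \<delta>" "real d * \<delta> \<le> 1"
  shows "measure_pmf.prob (random_ordering V)
           {\<pi>. real (longest_dag_path E \<pi> (delta_prefix \<pi> \<delta>))
                  \<le> (2 * c + 3) * ln (real (card V)) / ln (ln (real (card V)))}
         \<ge> 1 - 1 / real (card V) powr c"
proof -
  have "\<delta> \<le> real d * \<delta>" using assms(3,6) by (simp add: mult_le_cancel_right1)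
  moreover have "1 < ln (real (card V))" using assms(4) by (intro one_less_ln) simp
  ultimately show ?thesis
    using assms by (intro prob_longest_dag_path_le_bound power_div_fact_le_powr_log_div_loglog) auto
qed

theorem corollary4:
  shows "(\<forall>a > (0::real). \<forall>c > (0::real). \<exists>C > (0::real). \<exists>N::nat.
            \<forall>(V::nat set) E (d::nat) (\<delta>::real).
              ugraph V E \<and> max_degree_le V E d \<and> d \<ge> 1 \<and> card V \<ge> N \<and>
              0 < \<delta> \<and> \<delta> \<le> 1 \<and> \<delta> \<le> a * ln (real (card V)) / real d \<longrightarrow>
              measure_pmf.prob (random_ordering V)
                {\<pi>. real (longest_dag_path E \<pi> (delta_prefix \<pi> \<delta>)) \<le> C * ln (real (card V))}
              \<ge> 1 - 1 / real (card V) powr c)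
       \<and> (\<forall>c > (0::real). \<exists>C > (0::real). \<exists>N::nat.
            \<forall>(V::nat set) E (d::nat) (\<delta>::real).
              ugraph V E \<and> max_degree_le V E d \<and> d \<ge> 1 \<and> card V \<ge> N \<and>
              0 < \<delta> \<and> \<delta> \<le> 1 / real d \<longrightarrow>
              measure_pmf.prob (random_ordering V)
                {\<pi>. real (longest_dag_path E \<pi> (delta_prefix \<pi> \<delta>))
                       \<le> C * ln (real (card V)) / ln (ln (real (card V)))}
              \<ge> 1 - 1 / real (card V) powr c)"
proof (intro conjI allI impI, goal_cases)
  case (1 a c)
  then show ?case
    by (intro exI[of _ "exp 2 * a + c + 1"] exI[of _ 4] conjI allI impI prob_longest_dag_path_le_log)
      (auto simp: field_simps add_pos_pos)
next
  case (2 c)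
  then show ?case
    by (intro exI[of _ "2 * c + 3"] exI[of _ 4] conjI allI impI prob_longest_dag_path_le_log_div_loglog)
      (auto simp: field_simps)
qed

end
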